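(* Let $a,d$ be real numbers and let $A_{n,k}(a,d)$ be the general Eulerian numbers defined below. Then for every integer $n\ge 0$ and every integer $k$ with $-1\le k\le n-1$, $$A_{n,k}(a,d)=\sum_{i=0}^{k+1}(-1)^i\big[(k+2-i)d-a\big]^n\binom{n+1}{i}.$$
   Context: For real numbers $a,d$, the general Eulerian numbers $A_{n,k}(a,d)$ (integers $n\ge 0$, $k$) are defined by $A_{0,-1}(a,d)=1$, $A_{n,k}(a,d)=0$ whenever $k\ge n$ or $k\le -2$ (in particular $A_{0,k}=0$ for $k\neq -1$), and for $n\ge 1$, $-1\le k\le n-1$: $$A_{n,k}(a,d)=(-a+(k+2)d)A_{n-1,k}(a,d)+(a+(n-k-1)d)A_{n-1,k-1}(a,d).$$ Here $x^0=1$ for all $x$ (including $x=0$). *)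

theory Defs
  imports Complex_Main
begin

fun gen_eulerian :: "real \<Rightarrow> real \<Rightarrow> nat \<Rightarrow> int \<Rightarrow> real" where
  "gen_eulerian a d 0 k = (if k = -1 then 1 else 0)"
| "gen_eulerian a d (Suc m) k =
     (if k \<ge> int (Suc m) \<or> k \<le> -2 then 0
      else (- a + of_int (k + 2) * d) * gen_eulerian a d m k
         + (a + of_int (int (Suc m) - k - 1) * d) * gen_eulerian a d m (k - 1))"

end

theory Submission
  imports Defs
begin

text \<open>Let \<open>S(n,m)\<close> be the right-hand side with \<open>m = k + 1\<close>, so its terms involve
  \<open>x\<^sub>i = (m + 1 - i) d - a\<close>, while those of \<open>S(n,m-1)\<close> involve \<open>x\<^sub>i\<^sub>+\<^sub>1\<close>.
  It suffices that \<open>S\<close> obeys the defining recurrence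
  \<open>S(n+1,m) = ((m+1) d - a) S(n,m) + (a + (n+1-m) d) S(n,m-1)\<close> and vanishes for \<open>m > n\<close>.
  For the recurrence write the coefficients as \<open>x\<^sub>i + i d\<close> and \<open>(n + 1 - i) d - x\<^sub>i\<^sub>+\<^sub>1\<close>:
  the terms carrying \<open>d\<close> cancel by the absorption identity
  \<open>(i + 1) C(n+1,i+1) = (n + 1 - i) C(n+1,i)\<close>, and the others combine into \<open>S(n+1,m)\<close> by
  Pascal's rule. Vanishing then follows by induction on \<open>n\<close> from \<open>\<Sum>(-1)\<^sup>i C(1,i) = 0\<close>.\<close>

definition eulerian_sum :: "real \<Rightarrow> real \<Rightarrow> nat \<Rightarrow> nat \<Rightarrow> real" where
  "eulerian_sum a d n m =
     (\<Sum>i = 0..m. (-1) ^ i * (of_nat (m + 1 - i) * d - a) ^ n * of_nat ((n + 1) choose i))"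

lemma Suc_times_binomial_Suc_real:
  "real (Suc i) * real (Suc n choose Suc i) = (real n + 1 - real i) * real (Suc n choose i)"
proof (cases "i \<le> Suc n")
  case True
  have "Suc i * (Suc n choose Suc i) = (Suc n - i) * (Suc n choose i)"
    by (simp only: Suc_times_binomial binomial_absorb_comp diff_Suc_1)
  then have "real (Suc i) * real (Suc n choose Suc i) = real (Suc n - i) * real (Suc n choose i)"
    by (metis of_nat_mult)
  then show ?thesis
    using True by (simp add: of_nat_diff)
qed (simp add: binomial_eq_0 del: binomial_Suc_Suc)

lemma sum_alternating_binomial_absorption:
  fixes f :: "nat \<Rightarrow> real"
  shows "(\<Sum>i = 0..p. (-1) ^ i * (real n + 1 - real i) * f (Suc i) * real (Suc n choose i)) =
    - (\<Sum>i = 0..Suc p. (-1) ^ i * real i * f i * real (Suc n choose i))"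
proof -
  have "(-1) ^ i * (real n + 1 - real i) * f (Suc i) * real (Suc n choose i) =
      (-1) ^ i * f (Suc i) * ((real n + 1 - real i) * real (Suc n choose i))" for i
    by (simp add: algebra_simps)
  also have "\<dots> i = (-1) ^ i * f (Suc i) * (real (Suc i) * real (Suc n choose Suc i))" for i
    by (simp only: Suc_times_binomial_Suc_real)
  also have "\<dots> i = - ((-1) ^ Suc i * real (Suc i) * f (Suc i) * real (Suc n choose Suc i))" for i
    by (simp add: algebra_simps)
  finally have "(\<Sum>i = 0..p. (-1) ^ i * (real n + 1 - real i) * f (Suc i) * real (Suc n choose i)) =
      - (\<Sum>i = 0..p. (-1) ^ Suc i * real (Suc i) * f (Suc i) * real (Suc n choose Suc i))"
    by (simp only: sum_negf)
  then show ?thesis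
    by (simp only: sum.atLeast0_atMost_Suc_shift[of "\<lambda>i. (-1) ^ i * real i * f i * real (Suc n choose i)" p])
      simp
qed

lemma sum_alternating_binomial_pascal:
  fixes f :: "nat \<Rightarrow> real"
  shows "(\<Sum>i = 0..Suc p. (-1) ^ i * f i * real (Suc (Suc n) choose i)) =
    (\<Sum>i = 0..Suc p. (-1) ^ i * f i * real (Suc n choose i))
    - (\<Sum>i = 0..p. (-1) ^ i * f (Suc i) * real (Suc n choose i))"
proof -
  have "(\<Sum>i = 0..Suc p. (-1) ^ i * f i * real (Suc (Suc n) choose i)) =
      f 0 + (\<Sum>i = 0..p. (-1) ^ Suc i * f (Suc i) * real (Suc (Suc n) choose Suc i))"
    by (subst sum.atLeast0_atMost_Suc_shift) simp
  also have "\<dots> = f 0 * real (Suc n choose 0)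
      + (\<Sum>i = 0..p. (-1) ^ Suc i * f (Suc i) * real (Suc n choose Suc i))
      - (\<Sum>i = 0..p. (-1) ^ i * f (Suc i) * real (Suc n choose i))"
    unfolding add_diff_eq[symmetric] sum_subtractf[symmetric]
    by (simp add: algebra_simps)
  also have "\<dots> = (\<Sum>i = 0..Suc p. (-1) ^ i * f i * real (Suc n choose i))
      - (\<Sum>i = 0..p. (-1) ^ i * f (Suc i) * real (Suc n choose i))"
    by (simp only: sum.atLeast0_atMost_Suc_shift[of "\<lambda>i. (-1) ^ i * f i * real (Suc n choose i)" p])
      simp
  finally show ?thesis .
qed

lemma eulerian_sum_Suc_Suc:
  "eulerian_sum a d (Suc n) (Suc p) =
     (of_nat (p + 2) * d - a) * eulerian_sum a d n (Suc p)
     + (a + (real n - real p) * d) * eulerian_sum a d n p"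
proof -
  define x where "x i = real (p + 2 - i) * d - a" for i
  have upper: "(of_nat (p + 2) * d - a) * eulerian_sum a d n (Suc p) =
      (\<Sum>i = 0..Suc p. (-1) ^ i * x i ^ Suc n * real (Suc n choose i))
      + d * (\<Sum>i = 0..Suc p. (-1) ^ i * real i * x i ^ n * real (Suc n choose i))"
  proof -
    have "(of_nat (p + 2) * d - a) * ((-1) ^ i * x i ^ n * real (Suc n choose i)) =
        (-1) ^ i * x i ^ Suc n * real (Suc n choose i)
        + d * ((-1) ^ i * real i * x i ^ n * real (Suc n choose i))"
      if "i \<le> Suc p" for i
      using that by (simp add: x_def of_nat_diff algebra_simps)
    then show ?thesis
      unfolding eulerian_sum_def sum_distrib_left sum.distrib[symmetric]
      by (intro sum.cong) (auto simp: x_def Suc_diff_le)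
  qed
  have lower: "(a + (real n - real p) * d) * eulerian_sum a d n p =
      - (\<Sum>i = 0..p. (-1) ^ i * x (Suc i) ^ Suc n * real (Suc n choose i))
      + d * (\<Sum>i = 0..p. (-1) ^ i * (real n + 1 - real i) * x (Suc i) ^ n * real (Suc n choose i))"
  proof -
    have "(a + (real n - real p) * d) * ((-1) ^ i * x (Suc i) ^ n * real (Suc n choose i)) =
        - ((-1) ^ i * x (Suc i) ^ Suc n * real (Suc n choose i))
        + d * ((-1) ^ i * (real n + 1 - real i) * x (Suc i) ^ n * real (Suc n choose i))"
      if "i \<le> p" for i
      using that by (simp add: x_def of_nat_diff algebra_simps)
    then show ?thesis
      unfolding eulerian_sum_def sum_distrib_left sum_negf[symmetric] sum.distrib[symmetric]
      by (intro sum.cong) (auto simp: x_def Suc_diff_le)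
  qed
  have "eulerian_sum a d (Suc n) (Suc p) =
      (\<Sum>i = 0..Suc p. (-1) ^ i * x i ^ Suc n * real (Suc (Suc n) choose i))"
    unfolding eulerian_sum_def x_def by (intro sum.cong) (auto simp: add.commute)
  then show ?thesis
    unfolding upper lower sum_alternating_binomial_absorption[where f = "\<lambda>i. x i ^ n"]
      sum_alternating_binomial_pascal[where f = "\<lambda>i. x i ^ Suc n"]
    by (simp add: algebra_simps)
qed

lemma eulerian_sum_0_Suc: "eulerian_sum a d 0 (Suc p) = 0"
proof -
  have "eulerian_sum a d 0 (Suc p) = 1 + (\<Sum>i = 0..p. (-1) ^ Suc i * real (1 choose Suc i))"
    unfolding eulerian_sum_def by (subst sum.atLeast0_atMost_Suc_shift) simp
  also have "\<dots> = 1 + (\<Sum>i = 0..p. if i = 0 then -1 else 0)"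
    by (intro arg_cong[where f = "\<lambda>s. 1 + s"] sum.cong) (auto simp: binomial_eq_0)
  also have "\<dots> = 0"
    by (simp add: sum.delta)
  finally show ?thesis .
qed

lemma eulerian_sum_eq_0:
  assumes "n < m"
  shows "eulerian_sum a d n m = 0"
  using assms
proof (induction n arbitrary: m)
  case 0
  then show ?case
    by (metis eulerian_sum_0_Suc gr0_implies_Suc)
next
  case (Suc n)
  then obtain p where "m = Suc p" and "n < p"
    by (metis Suc_lessE)
  then show ?case
    using Suc.IH[of p] Suc.IH[of m] by (simp add: eulerian_sum_Suc_Suc)
qed

lemma gen_eulerian_below: "k \<le> -2 \<Longrightarrow> gen_eulerian a d n k = 0"
  by (cases n) auto

lemma gen_eulerian_eq_eulerian_sum: "gen_eulerian a d n (int m - 1) = eulerian_sum a d n m"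
proof (induction n arbitrary: m)
  case 0
  then show ?case
    by (cases m) (simp add: eulerian_sum_def, simp add: eulerian_sum_0_Suc)
next
  case (Suc n)
  show ?case
  proof (cases m)
    case 0
    then show ?thesis
      using Suc.IH[of 0] by (simp add: gen_eulerian_below eulerian_sum_def)
  next
    case (Suc p)
    show ?thesis
    proof (cases "Suc n < m")
      case True
      then show ?thesis
        by (simp add: eulerian_sum_eq_0)
    next
      case False
      have "gen_eulerian a d (Suc n) (int m - 1) =
          (of_nat (p + 2) * d - a) * gen_eulerian a d n (int m - 1)
          + (a + (real n - real p) * d) * gen_eulerian a d n (int p - 1)"
        using False Suc by (simp add: algebra_simps)
      then show ?thesis
        using Suc.IH[of m] Suc.IH[of p] Suc by (simp add: eulerian_sum_Suc_Suc)
    qed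
  qed
qed

theorem lemma2p5:
  fixes a d :: real and n :: nat and k :: int
  assumes "-1 \<le> k" and "k \<le> int n - 1"
  shows "gen_eulerian a d n k =
    (\<Sum>i = 0..nat (k + 1). (-1) ^ i * (of_int (k + 2 - int i) * d - a) ^ n * of_nat ((n + 1) choose i))"
proof -
  define m where "m = nat (k + 1)"
  have k: "k = int m - 1"
    using assms m_def by simp
  have shift: "of_nat (m + 1 - i) = (of_int (k + 2 - int i) :: real)" if "i \<in> {0..m}" for i
    using that k by (simp add: of_nat_diff)
  have "gen_eulerian a d n k = eulerian_sum a d n m"
    unfolding k by (rule gen_eulerian_eq_eulerian_sum)
  also have "\<dots> =
      (\<Sum>i = 0..m. (-1) ^ i * (of_int (k + 2 - int i) * d - a) ^ n * of_nat ((n + 1) choose i))"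
    unfolding eulerian_sum_def by (intro sum.cong refl) (simp only: shift)
  finally show ?thesis
    unfolding m_def .
qed

end
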